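(* Let $(C,D)$ define an irreducible MSPP (a MAP with $C$ diagonal). Then the squared coefficient of variation of the event-stationary inter-event time satisfies $c^2\ge 1$; equivalently $\boldsymbol{\pi}C\mathbf{1}\,\boldsymbol{\pi}C^{-1}\mathbf{1}\ge 1$.
   Context: A Markovian arrival process (MAP) of order $p$ is specified by $p\times p$ real matrices $C$ and $D$ such that $D$ has nonnegative entries, $C$ has nonnegative off-diagonal entries, and $Q=C+D$ is the generator (row sums zero) of an irreducible continuous-time Markov chain on $\{1,\dots,p\}$; $C$ is assumed nonsingular. An MSPP is a MAP with $C$ diagonal. $\mathbf{1}$ is the all-ones column vector; $\boldsymbol{\pi}$ is the stationary distribution of $Q$; $\boldsymbol{\alpha}$ is the stationary distribution of $P=(-C)^{-1}D$. The event-stationary inter-event time $T_1^{\alpha}$ has $\mathbb{P}(T_1^{\alpha}>t)=\boldsymbol{\alpha}e^{Ct}\mathbf{1}$, and $c^2=\mathrm{Var}(T_1^{\alpha})/\mathbb{E}^2[T_1^{\alpha}]$, which satisfies $c^2+1=2\,\boldsymbol{\pi}C\mathbf{1}\,\boldsymbol{\pi}C^{-1}\mathbf{1}$. *)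

theory Defs
  imports "HOL-Analysis.Analysis"
begin

definition generator :: "real^'n^'n \<Rightarrow> bool" where
  "generator Q \<longleftrightarrow> (\<forall>i j. i \<noteq> j \<longrightarrow> Q $ i $ j \<ge> 0) \<and> (\<forall>i. (\<Sum>j\<in>UNIV. Q $ i $ j) = 0)"

definition irreducible_generator :: "real^'n^'n \<Rightarrow> bool" where
  "irreducible_generator Q \<longleftrightarrow> generator Q \<and>
     (\<forall>i j. (i, j) \<in> {(a, b). a \<noteq> b \<and> Q $ a $ b > 0}\<^sup>*)"

definition is_MAP :: "real^'n^'n \<Rightarrow> real^'n^'n \<Rightarrow> bool" where
  "is_MAP C D \<longleftrightarrow> (\<forall>i j. D $ i $ j \<ge> 0) \<and> (\<forall>i j. i \<noteq> j \<longrightarrow> C $ i $ j \<ge> 0)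
     \<and> irreducible_generator (C + D) \<and> invertible C"

definition is_MSPP :: "real^'n^'n \<Rightarrow> real^'n^'n \<Rightarrow> bool" where
  "is_MSPP C D \<longleftrightarrow> is_MAP C D \<and> (\<forall>i j. i \<noteq> j \<longrightarrow> C $ i $ j = 0)"

definition stationary_dist :: "real^'n^'n \<Rightarrow> real^'n \<Rightarrow> bool" where
  "stationary_dist Q p \<longleftrightarrow> (\<forall>i. p $ i \<ge> 0) \<and> (\<Sum>i\<in>UNIV. p $ i) = 1 \<and> p v* Q = 0"

end

theory Submission
  imports Defs
begin

text \<open>Rows of C + D sum to zero and D is nonnegative, so the diagonal matrix C, being
  invertible, has negative diagonal -w. The two factors are then (\<Sum>i. p i w i) and
  (\<Sum>i. p i / w i), and their product is at least (\<Sum>i. p i)^2 = 1 by Cauchy-Schwarz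
  applied to the vectors sqrt(p w) and sqrt(p / w).\<close>

lemma sum_squared_le_sum_mult_sum_divide:
  fixes p w :: "'a \<Rightarrow> real"
  assumes p: "\<And>i. i \<in> I \<Longrightarrow> p i \<ge> 0" and w: "\<And>i. i \<in> I \<Longrightarrow> w i > 0"
  shows "(\<Sum>i\<in>I. p i)\<^sup>2 \<le> (\<Sum>i\<in>I. p i * w i) * (\<Sum>i\<in>I. p i / w i)"
proof -
  have "(\<Sum>i\<in>I. sqrt (p i * w i) * sqrt (p i / w i))\<^sup>2
          \<le> (\<Sum>i\<in>I. (sqrt (p i * w i))\<^sup>2) * (\<Sum>i\<in>I. (sqrt (p i / w i))\<^sup>2)"
    by (rule Cauchy_Schwarz_ineq_sum)
  moreover have "sqrt (p i * w i) * sqrt (p i / w i) = p i" if "i \<in> I" for i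
    using p[OF that] w[OF that] by (simp flip: real_sqrt_mult)
  moreover have "(sqrt (p i * w i))\<^sup>2 = p i * w i" "(sqrt (p i / w i))\<^sup>2 = p i / w i"
    if "i \<in> I" for i
    using p[OF that] w[OF that] by simp_all
  ultimately show ?thesis
    by (simp cong: sum.cong)
qed

lemma matrix_mul_matrix_inv:
  fixes A :: "'a::semiring_1^'n^'m"
  assumes "invertible A"
  shows "A ** matrix_inv A = mat 1"
  using assms unfolding invertible_def matrix_inv_def by (rule someI_ex[THEN conjunct1])

lemma matrix_vector_mult_diagonal:
  fixes A :: "'a::semiring_1^'n^'n"
  assumes "\<And>i j. i \<noteq> j \<Longrightarrow> A $ i $ j = 0"
  shows "A *v x = (\<chi> i. A $ i $ i * x $ i)"
proof -
  have "(\<Sum>j\<in>UNIV. A $ i $ j * x $ j) = A $ i $ i * x $ i" for i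
    using assms by (subst sum.remove[of _ i]) auto
  then show ?thesis
    by (simp add: matrix_vector_mult_def vec_eq_iff)
qed

lemma matrix_inv_diagonal_mult:
  fixes A :: "'a::field^'n^'n"
  assumes diag: "\<And>i j. i \<noteq> j \<Longrightarrow> A $ i $ j = 0" and "invertible A"
  shows diagonal_invertible_nonzero: "A $ i $ i \<noteq> 0"
    and "matrix_inv A *v x = (\<chi> i. x $ i / A $ i $ i)"
proof -
  have inverse_entry: "A $ i $ i * (matrix_inv A *v y) $ i = y $ i" for i y
  proof -
    have "A *v (matrix_inv A *v y) = y"
      by (simp add: matrix_vector_mul_assoc matrix_mul_matrix_inv[OF \<open>invertible A\<close>])
    then show ?thesis
      by (simp add: matrix_vector_mult_diagonal[OF diag] vec_eq_iff)
  qed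
  have nonzero: "A $ i $ i \<noteq> 0" for i
    using inverse_entry[of i "vec 1"] by auto
  then show "A $ i $ i \<noteq> 0" .
  show "matrix_inv A *v x = (\<chi> i. x $ i / A $ i $ i)"
    using inverse_entry[of _ x] nonzero by (simp add: vec_eq_iff field_simps)
qed

lemma MAP_sum_row_C_nonpos:
  assumes "is_MAP C D"
  shows "(\<Sum>j\<in>UNIV. C $ i $ j) \<le> 0"
proof -
  have "(\<Sum>j\<in>UNIV. C $ i $ j) + (\<Sum>j\<in>UNIV. D $ i $ j) = 0"
    using assms
    by (simp add: is_MAP_def irreducible_generator_def generator_def sum.distrib)
  moreover have "(\<Sum>j\<in>UNIV. D $ i $ j) \<ge> 0"
    using assms by (simp add: is_MAP_def sum_nonneg)
  ultimately show ?thesis by linarith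
qed

lemma MSPP_diagonal_neg:
  assumes "is_MSPP C D"
  shows "C $ i $ i < 0"
proof -
  have diag: "\<And>i j. i \<noteq> j \<Longrightarrow> C $ i $ j = 0" and MAP: "is_MAP C D"
    using assms by (auto simp: is_MSPP_def)
  have "(\<Sum>j\<in>UNIV. C $ i $ j) = C $ i $ i"
    using diag by (subst sum.remove[of _ i]) auto
  moreover have "C $ i $ i \<noteq> 0"
    using MAP diag by (simp add: is_MAP_def diagonal_invertible_nonzero)
  ultimately show ?thesis
    using MAP_sum_row_C_nonpos[OF MAP, of i] by linarith
qed

theorem corollary1:
  fixes C D :: "real^'n^'n" and p :: "real^'n"
  assumes "is_MSPP C D"
    and "stationary_dist (C + D) p"
  shows "(p \<bullet> (C *v vec 1)) * (p \<bullet> (matrix_inv C *v vec 1)) \<ge> 1"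
proof -
  define w where "w i = - C $ i $ i" for i
  have w_pos: "w i > 0" for i
    using MSPP_diagonal_neg[OF assms(1)] by (simp add: w_def)
  have diag: "\<And>i j. i \<noteq> j \<Longrightarrow> C $ i $ j = 0" and "invertible C"
    using assms(1) by (auto simp: is_MSPP_def is_MAP_def)
  have "p \<bullet> (C *v vec 1) = - (\<Sum>i\<in>UNIV. p $ i * w i)"
    by (simp add: matrix_vector_mult_diagonal[OF diag] inner_vec_def w_def sum_negf[symmetric])
  moreover have "p \<bullet> (matrix_inv C *v vec 1) = - (\<Sum>i\<in>UNIV. p $ i / w i)"
    by (simp add: matrix_inv_diagonal_mult[OF diag \<open>invertible C\<close>] inner_vec_def w_def
        sum_negf[symmetric])
  moreover have "(\<Sum>i\<in>UNIV. p $ i)\<^sup>2 \<le> (\<Sum>i\<in>UNIV. p $ i * w i) * (\<Sum>i\<in>UNIV. p $ i / w i)"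
    using assms(2) w_pos by (intro sum_squared_le_sum_mult_sum_divide) (auto simp: stationary_dist_def)
  moreover have "(\<Sum>i\<in>UNIV. p $ i) = 1"
    using assms(2) by (simp add: stationary_dist_def)
  ultimately show ?thesis by simp
qed

end
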